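(* In every tranca mínima (as defined in the context), the losing team places at least one tile during the game.
   Context: Domino tiles: the set of tiles consists of the 28 unordered pairs $[a,b]=[b,a]$ with $a,b\in\{0,1,\dots,6\}$; the number of points (pips) of $[a,b]$ is $a+b$. Four players, numbered 1 to 4, play; players 1 and 3 form one team and players 2 and 4 the other. The 28 tiles are dealt, 7 to each player (the initial hands). Players take turns in cyclic order $1,2,3,4,1,\dots$. The starting player places any one of their tiles on the table, forming a line of tiles (the board) with two open ends. On each subsequent turn, the player whose turn it is must, if they hold a tile containing a number equal to the number shown at one of the two open ends, place such a tile at that end (with equal numbers adjacent), the other number of the tile becoming the new open end; if they hold no such tile, they pass. A game ends either when a player places their last tile, or in a tranca (blocked game): a position in which no player holds a tile that can be placed. In a game ending in a tranca, the team whose two players' remaining tiles have the smaller total number of pips wins, and the other team is the losing team. A tranca mínima is a game ending in a tranca in which the total number of pips on the tiles of the board at the end of the game is $42$. *)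

theory Defs
  imports Main
begin

text \<open>A tile [a,b] is represented canonically as the pair (a,b) with a \<le> b \<le> 6.
  Players are numbered 1..4; teams are {1,3} and {2,4}.\<close>

type_synonym tile = "nat \<times> nat"

definition all_tiles :: "tile set" where
  "all_tiles = {(a,b). a \<le> b \<and> b \<le> 6}"

definition pips :: "tile \<Rightarrow> nat" where
  "pips t = fst t + snd t"

definition players :: "nat set" where
  "players = {1,2,3,4}"

definition next_player :: "nat \<Rightarrow> nat" where
  "next_player p = p mod 4 + 1"

definition has_num :: "tile \<Rightarrow> nat \<Rightarrow> bool" where
  "has_num t n \<longleftrightarrow> fst t = n \<or> snd t = n"

definition other_num :: "tile \<Rightarrow> nat \<Rightarrow> nat" where
  "other_num t n = (if fst t = n then snd t else fst t)"

text \<open>Game state: the hands, the two open ends of the board (None before the first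
  tile), the list of placements (player, tile) in order, and whose turn it is.\<close>
record dstate =
  hands :: "nat \<Rightarrow> tile set"
  ends :: "(nat \<times> nat) option"
  placed :: "(nat \<times> tile) list"
  turn :: nat

definition initial_state :: "dstate \<Rightarrow> bool" where
  "initial_state s \<longleftrightarrow>
     (\<forall>p\<in>players. hands s p \<subseteq> all_tiles \<and> card (hands s p) = 7) \<and>
     (\<forall>p\<in>players. \<forall>q\<in>players. p \<noteq> q \<longrightarrow> hands s p \<inter> hands s q = {}) \<and>
     (\<Union>p\<in>players. hands s p) = all_tiles \<and>
     ends s = None \<and> placed s = [] \<and> turn s = 1"

definition can_play :: "dstate \<Rightarrow> nat \<Rightarrow> bool" where
  "can_play s p \<longleftrightarrow> (case ends s of
      None \<Rightarrow> hands s p \<noteq> {}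
    | Some (l, r) \<Rightarrow> (\<exists>t\<in>hands s p. has_num t l \<or> has_num t r))"

definition place :: "dstate \<Rightarrow> nat \<Rightarrow> tile \<Rightarrow> (nat \<times> nat) \<Rightarrow> dstate \<Rightarrow> bool" where
  "place s p t e s' \<longleftrightarrow>
     hands s' = (hands s)(p := hands s p - {t}) \<and> ends s' = Some e \<and>
     placed s' = placed s @ [(p, t)] \<and> turn s' = next_player p"

definition step :: "dstate \<Rightarrow> dstate \<Rightarrow> bool" where
  "step s s' \<longleftrightarrow> (let p = turn s in
     (ends s = None \<and> (\<exists>t\<in>hands s p. place s p t (fst t, snd t) s')) \<or>
     (\<exists>l r. ends s = Some (l, r) \<and>
        ((\<exists>t\<in>hands s p. has_num t l \<and> place s p t (other_num t l, r) s') \<or>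
         (\<exists>t\<in>hands s p. has_num t r \<and> place s p t (l, other_num t r) s') \<or>
         (\<not> can_play s p \<and> hands s' = hands s \<and> ends s' = ends s \<and>
          placed s' = placed s \<and> turn s' = next_player p))))"

definition someone_out :: "dstate \<Rightarrow> bool" where
  "someone_out s \<longleftrightarrow> (\<exists>p\<in>players. hands s p = {})"

definition blocked :: "dstate \<Rightarrow> bool" where
  "blocked s \<longleftrightarrow> ends s \<noteq> None \<and> (\<forall>p\<in>players. \<not> can_play s p)"

definition tranca_game :: "dstate list \<Rightarrow> bool" where
  "tranca_game ss \<longleftrightarrow> ss \<noteq> [] \<and> initial_state (ss ! 0) \<and>
     (\<forall>i. Suc i < length ss \<longrightarrow> step (ss ! i) (ss ! Suc i)) \<and>
     (\<forall>i. Suc i < length ss \<longrightarrow> \<not> someone_out (ss ! i) \<and> \<not> blocked (ss ! i)) \<and>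
     blocked (last ss) \<and> \<not> someone_out (last ss)"

definition board_pips :: "dstate \<Rightarrow> nat" where
  "board_pips s = (\<Sum>x\<leftarrow>placed s. pips (snd x))"

definition tranca_minima :: "dstate list \<Rightarrow> bool" where
  "tranca_minima ss \<longleftrightarrow> tranca_game ss \<and> board_pips (last ss) = 42"

definition teams :: "nat set set" where
  "teams = {{1,3},{2,4}}"

definition team_pips :: "dstate \<Rightarrow> nat set \<Rightarrow> nat" where
  "team_pips s T = (\<Sum>p\<in>T. \<Sum>t\<in>hands s p. pips t)"

definition losing_team :: "dstate list \<Rightarrow> nat set \<Rightarrow> bool" where
  "losing_team ss T \<longleftrightarrow> T \<in> teams \<and>
     team_pips (last ss) (players - T) < team_pips (last ss) T"

end

theory Submission
  imports Defs
begin

(* Every team places a tile in every blocked game. Player 1 must open, so only the team {2,4} could stay silent. Its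
   hands would then never change, and after every turn the open ends avoid all numbers of
   whichever of players 2 and 4 has just passed or is about to pass. In the blocked final
   position, for an open end l and any number n the tile [l,n] cannot be in a hand, so it was
   placed and n was an open end at some time. Hence the numbers in the hands of players 2 and 4
   are disjoint subsets of {0..6}; but m numbers carry only m(m+1)/2 tiles, so a hand of seven
   tiles uses at least four numbers. *)

definition tile_nums :: "tile \<Rightarrow> nat set" where
  "tile_nums t = {fst t, snd t}"

definition hand_nums :: "dstate \<Rightarrow> nat \<Rightarrow> nat set" where
  "hand_nums s p = (\<Union>t\<in>hands s p. tile_nums t)"

definition open_nums :: "dstate \<Rightarrow> nat set" where
  "open_nums s = (case ends s of None \<Rightarrow> {} | Some (l, r) \<Rightarrow> {l, r})"

lemma card_ordered_pairs:
  fixes A :: "'a::linorder set"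
  assumes "finite A"
  shows "2 * card {(a, b). a \<in> A \<and> b \<in> A \<and> a \<le> b} = card A * (card A + 1)"
proof -
  define P where "P = {(a, b). a \<in> A \<and> b \<in> A \<and> a \<le> b}"
  define Q where "Q = {(a, b). a \<in> A \<and> b \<in> A \<and> b \<le> a}"
  have "P \<subseteq> A \<times> A" "Q \<subseteq> A \<times> A" by (auto simp: P_def Q_def)
  then have fin: "finite P" "finite Q" using assms by (auto intro: finite_subset)
  have "Q = prod.swap ` P" by (auto simp: P_def Q_def image_iff)
  then have "card Q = card P" by (simp add: card_image)
  moreover have "P \<union> Q = A \<times> A" by (auto simp: P_def Q_def)
  moreover have "P \<inter> Q = (\<lambda>a. (a, a)) ` A" by (auto simp: P_def Q_def)
  then have "card (P \<inter> Q) = card A" by (simp add: card_image inj_on_def)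
  ultimately have "card P + card P = card A * card A + card A"
    using card_Un_Int[OF fin] by (simp add: card_cartesian_product)
  then show ?thesis by (simp add: P_def algebra_simps)
qed

lemma card_tiles_le:
  assumes "finite A" "\<forall>t\<in>H. fst t \<le> snd t \<and> tile_nums t \<subseteq> A"
  shows "2 * card H \<le> card A * (card A + 1)"
proof -
  have "H \<subseteq> {(a, b). a \<in> A \<and> b \<in> A \<and> a \<le> b}"
    using assms(2) by (auto simp: tile_nums_def)
  moreover have "finite {(a, b). a \<in> A \<and> b \<in> A \<and> a \<le> b}"
    using assms(1) by (auto intro: finite_subset[of _ "A \<times> A"])
  ultimately have "card H \<le> card {(a, b). a \<in> A \<and> b \<in> A \<and> a \<le> b}"
    by (rule card_mono[rotated])
  then show ?thesis using card_ordered_pairs[OF assms(1)] by linarith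
qed

lemma four_le_card_nums_of_seven_tiles:
  assumes "H \<subseteq> all_tiles" "card H = 7"
  shows "4 \<le> card (\<Union>t\<in>H. tile_nums t)"
proof (rule ccontr)
  let ?m = "card (\<Union>t\<in>H. tile_nums t)"
  assume "\<not> 4 \<le> ?m"
  then have "?m * (?m + 1) \<le> 3 * 4" by (intro mult_le_mono) auto
  moreover have "finite H" using assms(2) card.infinite by fastforce
  then have "2 * card H \<le> ?m * (?m + 1)"
    using assms(1) by (intro card_tiles_le) (auto simp: all_tiles_def tile_nums_def)
  ultimately show False using assms(2) by simp
qed

lemma step_cases [consumes 1, case_names play pass]:
  assumes "step s s'"
  obtains (play) t where "t \<in> hands s (turn s)"
      "hands s' = (hands s)(turn s := hands s (turn s) - {t})"
      "placed s' = placed s @ [(turn s, t)]" "turn s' = next_player (turn s)"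
      "tile_nums t \<subseteq> open_nums s \<union> open_nums s'" "open_nums s' \<subseteq> open_nums s \<union> tile_nums t"
      "ends s' \<noteq> None"
  | (pass) "ends s \<noteq> None" "\<not> can_play s (turn s)" "hands s' = hands s" "ends s' = ends s"
      "placed s' = placed s" "turn s' = next_player (turn s)"
  using assms
  unfolding step_def Let_def place_def tile_nums_def open_nums_def has_num_def other_num_def
  by (auto split: if_splits)

lemma cannot_play_iff:
  assumes "ends s \<noteq> None"
  shows "\<not> can_play s p \<longleftrightarrow> hand_nums s p \<inter> open_nums s = {}"
  using assms unfolding can_play_def hand_nums_def tile_nums_def open_nums_def has_num_def
  by (auto split: option.splits)

lemma step_placed_mono: "step s s' \<Longrightarrow> set (placed s) \<subseteq> set (placed s')"
  by (erule step_cases) auto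

lemma step_hands_antimono: "step s s' \<Longrightarrow> hands s' p \<subseteq> hands s p"
  by (erule step_cases) auto

lemma step_hands_kept_or_placed: "step s s' \<Longrightarrow> hands s p \<subseteq> hands s' p \<union> snd ` set (placed s')"
  by (erule step_cases) (auto simp: image_iff)

lemma step_hands_unchanged:
  "step s s' \<Longrightarrow> (\<And>t. (p, t) \<notin> set (placed s')) \<Longrightarrow> hands s' p = hands s p"
  by (erule step_cases) auto

locale legal_play =
  fixes ss :: "dstate list"
  assumes nonempty: "ss \<noteq> []"
    and initial: "initial_state (ss ! 0)"
    and steps: "Suc i < length ss \<Longrightarrow> step (ss ! i) (ss ! Suc i)"
begin

lemma last_eq_nth: "last ss = ss ! (length ss - 1)"
  using nonempty by (simp add: last_conv_nth)

lemma turn_nth: "j < length ss \<Longrightarrow> turn (ss ! j) = j mod 4 + 1"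
proof (induction j)
  case 0
  then show ?case using initial by (simp add: initial_state_def)
next
  case (Suc j)
  from steps[OF Suc.prems] have "turn (ss ! Suc j) = next_player (turn (ss ! j))"
    by (cases rule: step_cases) auto
  then show ?case using Suc by (simp add: next_player_def mod_Suc)
qed

lemma turn_nth_in_players: "j < length ss \<Longrightarrow> turn (ss ! j) \<in> players"
  using mod_less_divisor[of 4 j] by (auto simp: turn_nth players_def)

lemma ends_nth: "0 < j \<Longrightarrow> j < length ss \<Longrightarrow> ends (ss ! j) \<noteq> None"
  using steps[of "j - 1"] by (cases rule: step_cases) auto

lemma placed_mono: "i \<le> j \<Longrightarrow> j < length ss \<Longrightarrow> set (placed (ss ! i)) \<subseteq> set (placed (ss ! j))"
  by (induction j rule: dec_induct) (use steps step_placed_mono in fastforce)+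

lemma placed_subset_last: "j < length ss \<Longrightarrow> set (placed (ss ! j)) \<subseteq> set (placed (last ss))"
  unfolding last_eq_nth by (rule placed_mono) auto

lemma hands_subset_initial: "j < length ss \<Longrightarrow> hands (ss ! j) p \<subseteq> hands (ss ! 0) p"
  by (induction j) (use steps step_hands_antimono in fastforce)+

lemma initial_hands_kept_or_placed:
  "j < length ss \<Longrightarrow> hands (ss ! 0) p \<subseteq> hands (ss ! j) p \<union> snd ` set (placed (ss ! j))"
proof (induction j)
  case (Suc j)
  have "hands (ss ! j) p \<subseteq> hands (ss ! Suc j) p \<union> snd ` set (placed (ss ! Suc j))"
    using steps[OF Suc.prems] by (rule step_hands_kept_or_placed)
  moreover have "set (placed (ss ! j)) \<subseteq> set (placed (ss ! Suc j))"
    using steps[OF Suc.prems] by (rule step_placed_mono)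
  ultimately show ?case using Suc by (simp add: Suc_lessD) blast
qed simp

lemma open_nums_le_6: "j < length ss \<Longrightarrow> open_nums (ss ! j) \<subseteq> {..6}"
proof (induction j)
  case 0
  then show ?case using initial by (simp add: initial_state_def open_nums_def)
next
  case (Suc j)
  from steps[OF Suc.prems] show ?case
  proof (cases rule: step_cases)
    case (play t)
    have "t \<in> hands (ss ! 0) (turn (ss ! j))"
      using play(1) hands_subset_initial[of j] Suc.prems by auto
    then have "t \<in> all_tiles"
      using initial turn_nth_in_players Suc.prems by (auto simp: initial_state_def)
    then show ?thesis
      using play(6) Suc by (auto simp: all_tiles_def tile_nums_def)
  next
    case pass
    then show ?thesis using Suc by (simp add: open_nums_def)
  qed
qed

lemma placed_nums_were_open:
  "j < length ss \<Longrightarrow> x \<in> set (placed (ss ! j)) \<Longrightarrow> tile_nums (snd x) \<subseteq> (\<Union>k\<le>j. open_nums (ss ! k))"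
proof (induction j)
  case 0
  then show ?case using initial by (simp add: initial_state_def)
next
  case (Suc j)
  have mono: "(\<Union>k\<le>j. open_nums (ss ! k)) \<subseteq> (\<Union>k\<le>Suc j. open_nums (ss ! k))"
    by (auto intro: le_SucI)
  from steps[OF Suc.prems(1)] show ?case
  proof (cases rule: step_cases)
    case (play t)
    then consider "x \<in> set (placed (ss ! j))" | "x = (turn (ss ! j), t)"
      using Suc.prems(2) by auto
    then show ?thesis
    proof cases
      case 1
      then show ?thesis using Suc mono by auto
    next
      case 2
      then show ?thesis using play(5) by (auto intro: le_SucI)
    qed
  next
    case pass
    then show ?thesis using Suc mono by auto
  qed
qed

lemma first_player_places: "1 < length ss \<Longrightarrow> \<exists>t. (1, t) \<in> set (placed (last ss))"
proof -
  assume len: "1 < length ss"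
  have "ends (ss ! 0) = None" "turn (ss ! 0) = 1" "placed (ss ! 0) = []"
    using initial by (auto simp: initial_state_def)
  with steps[of 0] len obtain t where "placed (ss ! 1) = [(1, t)]"
    by (cases rule: step_cases) auto
  then have "(1, t) \<in> set (placed (ss ! 1))" by simp
  then show ?thesis using placed_subset_last[OF len] by blast
qed

lemma silent_hands_const:
  assumes "\<And>t. (p, t) \<notin> set (placed (last ss))" "j < length ss"
  shows "hands (ss ! j) p = hands (ss ! 0) p"
  using assms(2)
proof (induction j)
  case (Suc j)
  have "hands (ss ! Suc j) p = hands (ss ! j) p"
    using steps[OF Suc.prems] step_hands_unchanged assms(1) placed_subset_last[OF Suc.prems] by blast
  then show ?case using Suc by simp
qed simp

lemma silent_turn_passes:
  assumes "\<And>t. (turn (ss ! i), t) \<notin> set (placed (last ss))" "Suc i < length ss"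
  shows "\<not> can_play (ss ! i) (turn (ss ! i)) \<and> ends (ss ! Suc i) = ends (ss ! i)"
  using steps[OF assms(2)]
proof (cases rule: step_cases)
  case (play t)
  then show ?thesis using assms placed_subset_last[OF assms(2)] by auto
qed simp

end

locale blocked_play = legal_play +
  assumes blocked_last: "blocked (last ss)"
begin

lemma one_less_length: "1 < length ss"
proof (rule ccontr)
  assume "\<not> 1 < length ss"
  then have "last ss = ss ! 0" using last_eq_nth by simp
  then show False using blocked_last initial by (simp add: blocked_def initial_state_def)
qed

lemma number_was_open:
  assumes "n \<le> 6"
  obtains k where "0 < k" "k < length ss" "n \<in> open_nums (ss ! k)"
proof -
  let ?j = "length ss - 1"
  have j: "?j < length ss" "last ss = ss ! ?j" using nonempty last_eq_nth by auto
  obtain l r where lr: "ends (last ss) = Some (l, r)"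
    using blocked_last by (auto simp: blocked_def)
  have "l \<le> 6" using open_nums_le_6[OF j(1)] lr j(2) by (auto simp: open_nums_def)
  define t where "t = (min l n, max l n)"
  have nums_t: "tile_nums t = {l, n}" by (auto simp: t_def tile_nums_def min_def max_def)
  have "t \<in> all_tiles" using \<open>l \<le> 6\<close> assms by (auto simp: t_def all_tiles_def)
  then obtain p where p: "p \<in> players" "t \<in> hands (ss ! 0) p"
    using initial unfolding initial_state_def by blast
  have "t \<notin> hands (last ss) p"
  proof
    assume "t \<in> hands (last ss) p"
    then have "l \<in> hand_nums (last ss) p \<inter> open_nums (last ss)"
      using lr nums_t by (auto simp: hand_nums_def open_nums_def)
    then show False using blocked_last p(1) cannot_play_iff lr by (auto simp: blocked_def)
  qed
  then have "t \<in> snd ` set (placed (ss ! ?j))"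
    using initial_hands_kept_or_placed[OF j(1)] p(2) j(2) by auto
  then have "n \<in> (\<Union>k\<le>?j. open_nums (ss ! k))"
    using placed_nums_were_open[OF j(1)] nums_t by fastforce
  then obtain k where k: "k \<le> ?j" "n \<in> open_nums (ss ! k)" by blast
  moreover have "open_nums (ss ! 0) = {}"
    using initial by (simp add: initial_state_def open_nums_def)
  ultimately show ?thesis using that j(1) by (metis empty_iff gr0I le_less_trans)
qed

lemma silent_cannot_play:
  assumes "\<And>t. (turn (ss ! j), t) \<notin> set (placed (last ss))" "j < length ss"
  shows "\<not> can_play (ss ! j) (turn (ss ! j))"
proof (cases "Suc j < length ss")
  case True
  then show ?thesis using silent_turn_passes assms(1) by blast
next
  case False
  then have "j = length ss - 1" using assms(2) by linarith
  then have "ss ! j = last ss" using last_eq_nth by simp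
  then show ?thesis using blocked_last turn_nth_in_players[OF assms(2)] by (auto simp: blocked_def)
qed

lemma silent_team_avoids_open:
  assumes silent: "\<And>p t. p \<in> {2, 4} \<Longrightarrow> (p, t) \<notin> set (placed (last ss))"
    and k: "0 < k" "k < length ss"
  obtains q where "q \<in> {2, 4}" "hand_nums (ss ! 0) q \<inter> open_nums (ss ! k) = {}"
proof -
  have team_turn: "turn (ss ! i) \<in> {2, 4} \<longleftrightarrow> odd i" if "i < length ss" for i
    using turn_nth[OF that] by auto presburger+
  obtain i where i: "0 < i" "i \<le> k" "odd i" "open_nums (ss ! k) = open_nums (ss ! i)"
  proof (cases "odd k")
    case True
    then show ?thesis using that k by blast
  next
    case False
    then have i: "odd (k - 1)" "0 < k - 1" "Suc (k - 1) = k" using k by (auto elim: oddE)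
    then have "ends (ss ! k) = ends (ss ! (k - 1))"
      using silent_turn_passes[of "k - 1"] silent team_turn k by auto
    then show ?thesis using that[of "k - 1"] i by (simp add: open_nums_def)
  qed
  let ?q = "turn (ss ! i)"
  have "i < length ss" using i k by simp
  then have q: "?q \<in> {2, 4}" using team_turn i by blast
  then have "\<not> can_play (ss ! i) ?q" using silent_cannot_play silent \<open>i < length ss\<close> by blast
  then have "hand_nums (ss ! i) ?q \<inter> open_nums (ss ! i) = {}"
    using cannot_play_iff ends_nth i \<open>i < length ss\<close> by blast
  moreover have "hand_nums (ss ! i) ?q = hand_nums (ss ! 0) ?q"
    using silent_hands_const silent q \<open>i < length ss\<close> by (simp add: hand_nums_def)
  ultimately show ?thesis using that q i(4) by auto
qed

lemma second_team_places: "\<exists>p\<in>{2, 4}. \<exists>t. (p, t) \<in> set (placed (last ss))"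
proof (rule ccontr)
  assume "\<not> ?thesis"
  then have silent: "\<And>p t. p \<in> {2, 4} \<Longrightarrow> (p, t) \<notin> set (placed (last ss))" by blast
  define N where "N q = hand_nums (ss ! 0) q" for q
  have hand: "hands (ss ! 0) q \<subseteq> all_tiles" "card (hands (ss ! 0) q) = 7" if "q \<in> {2, 4}" for q
    using initial that by (auto simp: initial_state_def players_def)
  have N_le_6: "N q \<subseteq> {..6}" if "q \<in> {2, 4}" for q
    using hand(1)[OF that] by (auto simp: N_def hand_nums_def tile_nums_def all_tiles_def)
  have N_ge_4: "4 \<le> card (N q)" if "q \<in> {2, 4}" for q
    using four_le_card_nums_of_seven_tiles[OF hand[OF that]] by (simp add: N_def hand_nums_def)
  have "n \<notin> N 2 \<inter> N 4" for n
  proof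
    assume n: "n \<in> N 2 \<inter> N 4"
    then have "n \<le> 6" using N_le_6 by auto
    then obtain k where "0 < k" "k < length ss" "n \<in> open_nums (ss ! k)" by (rule number_was_open)
    moreover obtain q where "q \<in> {2, 4}" "N q \<inter> open_nums (ss ! k) = {}"
      using silent_team_avoids_open[OF silent \<open>0 < k\<close> \<open>k < length ss\<close>] unfolding N_def by blast
    ultimately show False using n by auto
  qed
  then have "card (N 2) + card (N 4) = card (N 2 \<union> N 4)"
    using N_le_6 by (intro card_Un_disjoint[symmetric]) (auto intro: finite_subset)
  also have "\<dots> \<le> card {..6::nat}" using N_le_6 by (intro card_mono) auto
  finally have "card (N 2) + card (N 4) \<le> 7" by simp
  then show False using N_ge_4[of 2] N_ge_4[of 4] by simp
qed

lemma team_places: "T \<in> teams \<Longrightarrow> \<exists>p\<in>T. \<exists>t. (p, t) \<in> set (placed (last ss))"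
  using first_player_places[OF one_less_length] second_team_places by (auto simp: teams_def)

end

lemma tranca_game_blocked_play: "tranca_game ss \<Longrightarrow> blocked_play ss"
  unfolding tranca_game_def blocked_play_def blocked_play_axioms_def legal_play_def by blast

theorem mainTheorem7:
  assumes "tranca_minima ss"
    and "losing_team ss T"
  shows "\<exists>p\<in>T. \<exists>t. (p, t) \<in> set (placed (last ss))"
proof -
  have "blocked_play ss"
    using assms(1) by (simp add: tranca_minima_def tranca_game_blocked_play)
  moreover have "T \<in> teams" using assms(2) by (simp add: losing_team_def)
  ultimately show ?thesis by (rule blocked_play.team_places)
qed

end
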